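(* Let $n\ge1$. Every prime ideal $\mathfrak p$ of $\mathbb{S}_n$ can be written uniquely in the form $\mathfrak p=\mathbb{S}_{\mathcal N}\otimes\pi_{C\mathcal N}^{-1}(\mathfrak q)$, where $\mathcal N\subseteq\{1,\dots,n\}$ and $\mathfrak q$ is a prime ideal of $L_{C\mathcal N}$. Conversely, every ideal of this form is prime. Thus $\mathrm{Spec}(\mathbb{S}_n)=\coprod_{\mathcal N\subseteq\{1,\dots,n\}}\mathrm{Spec}(\mathbb{S}_n,\mathcal N)$, a disjoint union, where \[ \mathrm{Spec}(\mathbb{S}_n,\mathcal N)=\{\mathbb{S}_{\mathcal N}\otimes\pi_{C\mathcal N}^{-1}(\mathfrak q)\mid\mathfrak q\in\mathrm{Spec}(L_{C\mathcal N})\}. \]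
   Context: $K$ is a field. $\mathbb{S}_n$ is the $K$-algebra generated by $x_1,\dots,x_n,y_1,\dots,y_n$ subject to the defining relations $y_ix_i=1$ for all $i$, and $[x_i,y_j]=[x_i,x_j]=[y_i,y_j]=0$ for all $i\ne j$. For each $i$, $\mathbb{S}_1(i)$ is the subalgebra generated by $x_i,y_i$, and $\mathbb{S}_n=\mathbb{S}_1(1)\otimes\cdots\otimes\mathbb{S}_1(n)$. $F(i)=\bigoplus_{k,l\in\mathbb N}K(x_i^ky_i^l-x_i^{k+1}y_i^{l+1})$, an ideal of $\mathbb{S}_1(i)$ with $\mathbb{S}_1(i)/F(i)\cong K[x_i,x_i^{-1}]$ via $x_i\mapsto x_i$, $y_i\mapsto x_i^{-1}$. For $\mathcal N\subseteq\{1,\dots,n\}$, let $C\mathcal N$ be its complement and define: - $\mathbb{S}_{\mathcal N}=\bigotimes_{i\in\mathcal N}\mathbb{S}_1(i)$ (equal to $K$ if $\mathcal N=\emptyset$), so $\mathbb{S}_n=\mathbb{S}_{\mathcal N}\otimes\mathbb{S}_{C\mathcal N}$; - $L_{\mathcal N}=K[x_i,x_i^{-1}:i\in\mathcal N]$; - $\mathfrak a_{\mathcal N}=\sum_{i\in\mathcal N}\big(F(i)\otimes\bigotimes_{j\in\mathcal N\setminus\{i\}}\mathbb{S}_1(j)\big)$, an ideal of $\mathbb{S}_{\mathcal N}$; - $\pi_{\mathcal N}:\mathbb{S}_{\mathcal N}\to\mathbb{S}_{\mathcal N}/\mathfrak a_{\mathcal N}\cong L_{\mathcal N}$ the canonical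 epimorphism. Prime ideals are proper by convention. *)

theory Defs
  imports Main "HOL-Library.Poly_Mapping" "HOL-Library.Function_Algebras"
begin

text \<open>Bic k l stands for the monomial x^k y^l of S_1. Since yx = 1 we have
  x^a y^b x^c y^d = x^(a + (c - b)) y^((b - c) + d) (truncated subtraction on nat).
  The monoid operation is written additively so that the library monoid algebra
  (type-class instances of poly_mapping) applies.\<close>

datatype bic = Bic nat nat

fun bx :: "bic \<Rightarrow> nat" where "bx (Bic k l) = k"
fun by' :: "bic \<Rightarrow> nat" where "by' (Bic k l) = l"

instantiation bic :: monoid_add
begin
definition zero_bic :: bic where "zero_bic = Bic 0 0"
fun plus_bic :: "bic \<Rightarrow> bic \<Rightarrow> bic" where
  "plus_bic (Bic a b) (Bic c d) = Bic (a + (c - b)) ((b - c) + d)"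
instance
proof
  fix x y z :: bic
  show "x + y + z = x + (y + z)"
    by (cases x; cases y; cases z) auto
  show "0 + x = x" by (cases x) (simp add: zero_bic_def)
  show "x + 0 = x" by (cases x) (simp add: zero_bic_def)
qed
end

text \<open>Index set {1..n} is the finite type 'n. S_n = S_1(1) (x) ... (x) S_1(n) is the
  monoid algebra over K of the product of n copies of the bicyclic monoid: a
  monomial m :: 'n \<Rightarrow> bic stands for prod_i x_i^(bx (m i)) y_i^(by' (m i)).\<close>

type_synonym ('n, 'k) jac = "('n \<Rightarrow> bic) \<Rightarrow>\<^sub>0 'k"

text \<open>Laurent polynomials: monomial e :: 'n \<Rightarrow> int stands for prod_i x_i^(e i).\<close>
type_synonym ('n, 'k) laur = "('n \<Rightarrow> int) \<Rightarrow>\<^sub>0 'k"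

text \<open>S_N = tensor of S_1(i), i in N, as the subalgebra of S_n of elements only
  involving the variables x_i, y_i with i in N.\<close>
definition S_sub :: "'n set \<Rightarrow> ('n, 'k::field) jac set" where
  "S_sub N = {p. \<forall>m \<in> Poly_Mapping.keys p. \<forall>i. i \<notin> N \<longrightarrow> m i = 0}"

definition L_sub :: "'n set \<Rightarrow> ('n, 'k::field) laur set" where
  "L_sub N = {p. \<forall>e \<in> Poly_Mapping.keys p. \<forall>i. i \<notin> N \<longrightarrow> e i = 0}"

text \<open>pi_N : S_N \<rightarrow> S_N / a_N \<cong> L_N, i.e. the algebra map with x_i \<mapsto> x_i,
  y_i \<mapsto> x_i^-1 (tensor product of the maps S_1(i) \<rightarrow> S_1(i)/F(i) \<cong> K[x_i,x_i^-1]).\<close>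
definition lap_mon :: "('n \<Rightarrow> bic) \<Rightarrow> ('n \<Rightarrow> int)" where
  "lap_mon m = (\<lambda>i. int (bx (m i)) - int (by' (m i)))"

definition piS :: "('n, 'k::field) jac \<Rightarrow> ('n, 'k) laur" where
  "piS p = (\<Sum>m \<in> Poly_Mapping.keys p. Poly_Mapping.single (lap_mon m) (Poly_Mapping.lookup p m))"

definition pi_inv :: "'n set \<Rightarrow> ('n, 'k::field) laur set \<Rightarrow> ('n, 'k) jac set" where
  "pi_inv N q = {a \<in> S_sub N. piS a \<in> q}"

text \<open>S_N (x) J for J \<subseteq> S_{CN}, viewed inside S_n = S_N (x) S_{CN}: the K-span of
  the elements a (x) b = a b, a in S_N, b in J (scalars absorbed into a).\<close>
definition tens :: "'n set \<Rightarrow> ('n, 'k::field) jac set \<Rightarrow> ('n, 'k) jac set" where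
  "tens N J = {x. \<exists>r (a :: nat \<Rightarrow> ('n, 'k) jac) b. x = (\<Sum>i<r. a i * b i)
                  \<and> (\<forall>i<r. a i \<in> S_sub N \<and> b i \<in> J)}"

section \<open>Ideals and prime ideals (of a possibly noncommutative ring, given as a subring carrier)\<close>

definition ideal_in :: "'a::ring set \<Rightarrow> 'a set \<Rightarrow> bool" where
  "ideal_in R I \<longleftrightarrow> I \<subseteq> R \<and> 0 \<in> I \<and> (\<forall>a\<in>I. \<forall>b\<in>I. a + b \<in> I \<and> - a \<in> I)
     \<and> (\<forall>r\<in>R. \<forall>a\<in>I. r * a \<in> I \<and> a * r \<in> I)"

text \<open>Prime (proper by convention): for ideals I, J, IJ \<subseteq> P implies I \<subseteq> P or J \<subseteq> P.
  Since P is additively closed, IJ \<subseteq> P iff all products a b (a in I, b in J) lie in P.\<close>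
definition prime_in :: "'a::ring set \<Rightarrow> 'a set \<Rightarrow> bool" where
  "prime_in R P \<longleftrightarrow> ideal_in R P \<and> P \<noteq> R \<and>
     (\<forall>I J. ideal_in R I \<longrightarrow> ideal_in R J \<longrightarrow> (\<forall>a\<in>I. \<forall>b\<in>J. a * b \<in> P) \<longrightarrow> I \<subseteq> P \<or> J \<subseteq> P)"

definition Spec_N :: "'n set \<Rightarrow> ('n, 'k::field) jac set set" where
  "Spec_N N = {tens N (pi_inv (- N) q) | q. prime_in (L_sub (- N)) q}"

end

theory Submission
  imports Defs
begin

(* The elements e_i = 1 - x_i y_i are idempotents with \<pi>(e_i) = 0. For a prime P let N be the
   set of i with e_i \<notin> P. Then P contains the kernel of \<pi> on S_CN, so J = P \<inter> S_CN is the
   preimage of q = \<pi>(J), and q is prime because S_N commutes with S_CN. Conversely, the product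
   e_N of the e_i, i \<in> N, satisfies e_N u e_N = 0 for every monomial u \<noteq> 1 of S_N; sandwiching
   with powers of the x_i, y_i and with e_N isolates a component of an element of
   S_n = S_N \<otimes> S_CN. This shows both P = S_N \<otimes> J and that S_N \<otimes> \<pi>^-1(q) is prime when q is.
   Since N and q can be read off from P, the decomposition is unique. *)

lemma poly_mapping_sum_single:
  "p = (\<Sum>m\<in>Poly_Mapping.keys p. Poly_Mapping.single m (Poly_Mapping.lookup p m))"
  by (rule poly_mapping_eqI) (simp add: lookup_sum lookup_single when_def in_keys_iff)

lemma lookup_sum_single:
  assumes "finite A"
  shows "Poly_Mapping.lookup (\<Sum>m\<in>A. Poly_Mapping.single (f m) (g m)) w = (\<Sum>m\<in>{m\<in>A. f m = w}. g m)"
  using assms by (simp add: lookup_sum lookup_single when_def sum.inter_filter)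

lemma times_sum_single:
  fixes a b :: "'a::monoid_add \<Rightarrow>\<^sub>0 'b::semiring_0"
  shows "a * b = (\<Sum>w\<in>Poly_Mapping.keys a. \<Sum>v\<in>Poly_Mapping.keys b.
    Poly_Mapping.single (w + v) (Poly_Mapping.lookup a w * Poly_Mapping.lookup b v))"
proof -
  have "a * b = (\<Sum>w\<in>Poly_Mapping.keys a. Poly_Mapping.single w (Poly_Mapping.lookup a w)) *
      (\<Sum>v\<in>Poly_Mapping.keys b. Poly_Mapping.single v (Poly_Mapping.lookup b v))"
    using poly_mapping_sum_single[of a] poly_mapping_sum_single[of b] by simp
  also have "\<dots> = (\<Sum>w\<in>Poly_Mapping.keys a. \<Sum>v\<in>Poly_Mapping.keys b.
      Poly_Mapping.single w (Poly_Mapping.lookup a w) * Poly_Mapping.single v (Poly_Mapping.lookup b v))"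
    by (subst sum_distrib_right) (simp only: sum_distrib_left)
  finally show ?thesis by (simp add: mult_single)
qed

lemma lookup_single_zero_mult:
  "Poly_Mapping.lookup (Poly_Mapping.single 0 c * p) v = (c::'b::semiring_0) * Poly_Mapping.lookup p v"
  by (simp add: mult_map_scale_conv_mult[symmetric] map.rep_eq when_def)

lemma bic_zero: "(0 :: bic) = Bic 0 0"
  by (simp add: zero_bic_def)

lemma bic_eta: "b = Bic (bx b) (by' b)"
  by (cases b) auto

definition mon_in :: "'n set \<Rightarrow> ('n \<Rightarrow> bic) \<Rightarrow> bool" where
  "mon_in N m \<longleftrightarrow> (\<forall>i. i \<notin> N \<longrightarrow> m i = 0)"

definition restrict_mon :: "'n set \<Rightarrow> ('n \<Rightarrow> bic) \<Rightarrow> 'n \<Rightarrow> bic" where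
  "restrict_mon N m = (\<lambda>i. if i \<in> N then m i else 0)"

lemma S_sub_iff: "p \<in> S_sub N \<longleftrightarrow> (\<forall>m\<in>Poly_Mapping.keys p. mon_in N m)"
  by (simp add: S_sub_def mon_in_def)

lemma mon_in_add: "mon_in N a \<Longrightarrow> mon_in N b \<Longrightarrow> mon_in N (a + b)"
  by (simp add: mon_in_def)

lemma mon_in_zero [simp]: "mon_in N 0"
  by (simp add: mon_in_def)

lemma mon_in_restrict_mon: "mon_in N (restrict_mon N m)"
  by (simp add: mon_in_def restrict_mon_def)

lemma restrict_mon_add_Compl: "restrict_mon N m + restrict_mon (- N) m = m"
  by (rule ext) (simp add: restrict_mon_def)

lemma restrict_mon_add: "restrict_mon N (a + b) = restrict_mon N a + restrict_mon N b"
  by (rule ext) (simp add: restrict_mon_def)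

lemma restrict_mon_zero [simp]: "restrict_mon N 0 = 0"
  by (rule ext) (simp add: restrict_mon_def)

lemma restrict_mon_id: "mon_in N m \<Longrightarrow> restrict_mon N m = m"
  by (rule ext) (simp add: restrict_mon_def mon_in_def)

lemma restrict_mon_disjoint: "mon_in A m \<Longrightarrow> A \<inter> B = {} \<Longrightarrow> restrict_mon B m = 0"
  by (rule ext) (auto simp: restrict_mon_def mon_in_def)

lemma mon_in_add_commute: "mon_in A w \<Longrightarrow> mon_in B v \<Longrightarrow> A \<inter> B = {} \<Longrightarrow> w + v = v + w"
  by (rule ext) (simp add: mon_in_def; metis add_0_left add_0_right disjoint_iff)

lemma mon_in_add_Compl_unique:
  assumes "mon_in N u" "mon_in (- N) v" "mon_in N u'" "mon_in (- N) v'" "u + v = u' + v'"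
  shows "u = u' \<and> v = v'"
proof -
  have "restrict_mon N (u + v) = u" "restrict_mon N (u' + v') = u'"
    "restrict_mon (- N) (u + v) = v" "restrict_mon (- N) (u' + v') = v'"
    using assms(1-4) by (simp_all add: restrict_mon_add restrict_mon_id restrict_mon_disjoint)
  then show ?thesis using assms(5) by simp
qed

lemma S_sub_single: "mon_in N m \<Longrightarrow> Poly_Mapping.single m c \<in> S_sub N"
  by (simp add: S_sub_iff)

lemma S_sub_single_restrict_mon: "Poly_Mapping.single (restrict_mon N m) c \<in> S_sub N"
  by (rule S_sub_single[OF mon_in_restrict_mon])

lemma S_sub_zero [simp]: "0 \<in> S_sub N"
  by (simp add: S_sub_iff)

lemma S_sub_one [simp]: "1 \<in> S_sub N"
  by (simp add: S_sub_iff)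

lemma S_sub_add: "a \<in> S_sub N \<Longrightarrow> b \<in> S_sub N \<Longrightarrow> a + b \<in> S_sub N"
  using keys_add[of a b] by (auto simp: S_sub_iff)

lemma S_sub_uminus: "a \<in> S_sub N \<Longrightarrow> - a \<in> S_sub N"
  by (simp add: S_sub_iff)

lemma S_sub_diff: "a \<in> S_sub N \<Longrightarrow> b \<in> S_sub N \<Longrightarrow> a - b \<in> S_sub N"
  using S_sub_add[of a N "- b"] S_sub_uminus by auto

lemma S_sub_sum: "(\<And>i. i \<in> A \<Longrightarrow> f i \<in> S_sub N) \<Longrightarrow> sum f A \<in> S_sub N"
  by (induction A rule: infinite_finite_induct) (auto intro: S_sub_add)

lemma S_sub_mult: "a \<in> S_sub N \<Longrightarrow> b \<in> S_sub N \<Longrightarrow> a * b \<in> S_sub N"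
  unfolding times_sum_single[of a b]
  by (intro S_sub_sum S_sub_single mon_in_add) (auto simp: S_sub_iff)

lemma S_sub_mono: "a \<in> S_sub A \<Longrightarrow> A \<subseteq> B \<Longrightarrow> a \<in> S_sub B"
  by (auto simp: S_sub_iff mon_in_def)

lemma S_sub_commute:
  fixes a b :: "('n, 'k::field) jac"
  assumes "a \<in> S_sub A" "b \<in> S_sub B" "A \<inter> B = {}"
  shows "a * b = b * a"
proof -
  have "a * b = (\<Sum>w\<in>Poly_Mapping.keys a. \<Sum>v\<in>Poly_Mapping.keys b.
      Poly_Mapping.single (v + w) (Poly_Mapping.lookup b v * Poly_Mapping.lookup a w))"
    unfolding times_sum_single[of a b]
    by (intro sum.cong refl, subst mon_in_add_commute[of A _ B])
      (use assms in \<open>auto simp: S_sub_iff mult.commute\<close>)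
  also have "\<dots> = b * a"
    by (subst times_sum_single) (rule sum.swap)
  finally show ?thesis .
qed

lemma single_eq_restrict_mon_mult:
  "Poly_Mapping.single m c =
     Poly_Mapping.single (restrict_mon N m) 1 * Poly_Mapping.single (restrict_mon (- N) m) (c::'k::field)"
  by (simp add: mult_single restrict_mon_add_Compl)

lemma single_eq_restrict_mon_mult':
  "Poly_Mapping.single m c =
     Poly_Mapping.single (restrict_mon (- N) m) c * Poly_Mapping.single (restrict_mon N m) (1::'k::field)"
  by (simp add: mult_single)
    (metis mon_in_add_commute mon_in_restrict_mon restrict_mon_add_Compl Compl_disjoint2 inf_commute)

section \<open>Components with respect to the decomposition \<open>S\<^sub>n = S\<^sub>N \<otimes> S\<^sub>C\<^sub>N\<close>\<close>

text \<open>Every \<open>x\<close> is uniquely \<open>\<Sum>\<^sub>u u \<otimes> component N u x\<close>, with \<open>u\<close> ranging over the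
  monomials of \<open>S\<^sub>N\<close> and \<open>component N u x \<in> S\<^sub>C\<^sub>N\<close>.\<close>

definition component :: "'n set \<Rightarrow> ('n \<Rightarrow> bic) \<Rightarrow> ('n, 'k::field) jac \<Rightarrow> ('n, 'k) jac" where
  "component N u x = (\<Sum>m\<in>{m\<in>Poly_Mapping.keys x. restrict_mon N m = u}.
     Poly_Mapping.single (restrict_mon (- N) m) (Poly_Mapping.lookup x m))"

lemma lookup_component:
  "Poly_Mapping.lookup (component N u x) v =
     (if mon_in N u \<and> mon_in (- N) v then Poly_Mapping.lookup x (u + v) else 0)"
proof -
  define M where "M = {m\<in>Poly_Mapping.keys x. restrict_mon N m = u \<and> restrict_mon (- N) m = v}"
  have "Poly_Mapping.lookup (component N u x) v = (\<Sum>m\<in>M. Poly_Mapping.lookup x m)"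
    unfolding component_def M_def by (subst lookup_sum_single) simp_all
  moreover have "M = (if mon_in N u \<and> mon_in (- N) v then {u + v} \<inter> Poly_Mapping.keys x else {})"
    by (auto simp: M_def restrict_mon_add restrict_mon_id restrict_mon_disjoint mon_in_restrict_mon)
      (metis restrict_mon_add_Compl)
  ultimately show ?thesis
    by (cases "u + v \<in> Poly_Mapping.keys x") (auto simp: in_keys_iff)
qed

lemma component_add: "component N u (x + y) = component N u x + component N u y"
  by (rule poly_mapping_eqI) (simp add: lookup_component lookup_add)

lemma component_uminus: "component N u (- x) = - component N u x"
  by (rule poly_mapping_eqI) (simp add: lookup_component)

lemma component_zero [simp]: "component N u 0 = 0"
  by (simp add: component_def)

lemma component_sum: "component N u (sum f A) = (\<Sum>i\<in>A. component N u (f i))"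
  by (induction A rule: infinite_finite_induct) (auto simp: component_add)

lemma component_in_S_sub: "component N u x \<in> S_sub (- N)"
  unfolding S_sub_iff by (auto simp: in_keys_iff lookup_component split: if_splits)

lemma component_not_mon_in: "\<not> mon_in N u \<Longrightarrow> component N u x = 0"
  by (rule poly_mapping_eqI) (simp add: lookup_component)

lemma component_notin_image: "u \<notin> restrict_mon N ` Poly_Mapping.keys x \<Longrightarrow> component N u x = 0"
  unfolding component_def by (rule sum.neutral) auto

lemma sum_component:
  "x = (\<Sum>u\<in>restrict_mon N ` Poly_Mapping.keys x. Poly_Mapping.single u 1 * component N u x)"
proof -
  have "Poly_Mapping.single u 1 * component N u x =
      (\<Sum>m\<in>{m\<in>Poly_Mapping.keys x. restrict_mon N m = u}. Poly_Mapping.single m (Poly_Mapping.lookup x m))" for u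
    unfolding component_def sum_distrib_left
    by (intro sum.cong refl) (auto simp: mult_single restrict_mon_add_Compl)
  then have "(\<Sum>u\<in>restrict_mon N ` Poly_Mapping.keys x. Poly_Mapping.single u 1 * component N u x) =
      (\<Sum>m\<in>Poly_Mapping.keys x. Poly_Mapping.single m (Poly_Mapping.lookup x m))"
    by (simp add: sum.group)
  then show ?thesis using poly_mapping_sum_single[of x] by simp
qed

lemma lookup_mult_S_sub_Compl:
  fixes a c :: "('n, 'k::field) jac"
  assumes a: "a \<in> S_sub N" and c: "c \<in> S_sub (- N)" and u: "mon_in N u" and v: "mon_in (- N) v"
  shows "Poly_Mapping.lookup (a * c) (u + v) = Poly_Mapping.lookup a u * Poly_Mapping.lookup c v"
proof -
  have eq: "w + v' = u + v \<longleftrightarrow> w = u \<and> v' = v"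
    if "w \<in> Poly_Mapping.keys a" "v' \<in> Poly_Mapping.keys c" for w v'
    using that a c u v mon_in_add_Compl_unique[of N w v' u v] by (auto simp: S_sub_iff)
  have "Poly_Mapping.lookup (a * c) (u + v) = (\<Sum>w\<in>Poly_Mapping.keys a. \<Sum>v'\<in>Poly_Mapping.keys c.
      (Poly_Mapping.lookup a w * Poly_Mapping.lookup c v' when w + v' = u + v))"
    by (subst times_sum_single) (simp add: lookup_sum lookup_single)
  also have "\<dots> = (\<Sum>w\<in>Poly_Mapping.keys a. if w = u then (\<Sum>v'\<in>Poly_Mapping.keys c.
      if v' = v then Poly_Mapping.lookup a w * Poly_Mapping.lookup c v' else 0) else 0)"
    by (intro sum.cong refl) (auto simp: eq when_def intro: sum.cong)
  also have "\<dots> = Poly_Mapping.lookup a u * Poly_Mapping.lookup c v"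
    by (simp add: in_keys_iff)
  finally show ?thesis .
qed

lemma component_mult:
  fixes a c :: "('n, 'k::field) jac"
  assumes a: "a \<in> S_sub N" and c: "c \<in> S_sub (- N)"
  shows "component N u (a * c) = Poly_Mapping.single 0 (Poly_Mapping.lookup a u) * c"
proof (rule poly_mapping_eqI)
  fix v
  show "Poly_Mapping.lookup (component N u (a * c)) v =
      Poly_Mapping.lookup (Poly_Mapping.single 0 (Poly_Mapping.lookup a u) * c) v"
  proof (cases "mon_in N u \<and> mon_in (- N) v")
    case True
    then show ?thesis
      using lookup_mult_S_sub_Compl[OF a c] by (simp add: lookup_component lookup_single_zero_mult)
  next
    case False
    then have "Poly_Mapping.lookup a u = 0 \<or> Poly_Mapping.lookup c v = 0"
      using a c by (auto simp: S_sub_iff in_keys_iff)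
    then show ?thesis using False by (auto simp: lookup_component lookup_single_zero_mult)
  qed
qed

lemma component_S_sub_Compl:
  assumes "x \<in> S_sub (- N)"
  shows "component N u x = (if u = 0 then x else 0)"
proof -
  have "component N u x = component N u (1 * x)" by simp
  also have "\<dots> = Poly_Mapping.single 0 (Poly_Mapping.lookup 1 u) * x"
    by (rule component_mult[OF S_sub_one assms])
  finally show ?thesis by (simp add: lookup_one)
qed

section \<open>The idempotents \<open>1 - x\<^sub>i y\<^sub>i\<close>\<close>

definition xy_mon :: "'n \<Rightarrow> 'n \<Rightarrow> bic" where
  "xy_mon i = (\<lambda>j. if j = i then Bic 1 1 else 0)"

definition xy_mon_set :: "'n set \<Rightarrow> 'n \<Rightarrow> bic" where
  "xy_mon_set T = (\<lambda>j. if j \<in> T then Bic 1 1 else 0)"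

definition idem :: "'n \<Rightarrow> ('n, 'k::field) jac" where
  "idem i = 1 - Poly_Mapping.single (xy_mon i) 1"

text \<open>The product of the pairwise commuting elements \<open>idem i\<close>, \<open>i \<in> N\<close>, expanded
  (the algebra is not commutative, so \<^const>\<open>prod\<close> is not available).\<close>

definition idem_prod :: "'n set \<Rightarrow> ('n, 'k::field) jac" where
  "idem_prod N = (\<Sum>T\<in>Pow N. Poly_Mapping.single (xy_mon_set T) ((-1) ^ card T))"

lemma xy_mon_add:
  "xy_mon i + w = (if bx (w i) = 0 then w(i := Bic 1 (Suc (by' (w i)))) else w)"
  by (rule ext, cases "w i") (auto simp: xy_mon_def)

lemma add_xy_mon:
  "w + xy_mon i = (if by' (w i) = 0 then w(i := Bic (Suc (bx (w i))) 1) else w)"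
  by (rule ext, cases "w i") (auto simp: xy_mon_def)

lemma idem_mult_single:
  "idem i * Poly_Mapping.single w c = (if bx (w i) = 0
     then Poly_Mapping.single w c - Poly_Mapping.single (w(i := Bic 1 (Suc (by' (w i))))) c
     else (0::('n, 'k::field) jac))"
  unfolding idem_def left_diff_distrib mult_single by (simp add: xy_mon_add)

lemma single_mult_idem:
  "Poly_Mapping.single w c * idem i = (if by' (w i) = 0
     then Poly_Mapping.single w c - Poly_Mapping.single (w(i := Bic (Suc (bx (w i))) 1)) c
     else (0::('n, 'k::field) jac))"
  unfolding idem_def right_diff_distrib mult_single by (simp add: add_xy_mon)

lemma idem_sandwich_single:
  "idem i * Poly_Mapping.single w c * idem i =
     (if w i = 0 then idem i * Poly_Mapping.single (w(i := 0)) c else (0::('n, 'k::field) jac))"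
proof (cases "w i")
  case (Bic k l)
  show ?thesis
  proof (cases "k = 0 \<and> l = 0")
    case True
    then have "w(i := 0) = w" using Bic by (auto simp: fun_eq_iff bic_zero)
    then show ?thesis
      using Bic True by (simp add: idem_mult_single single_mult_idem left_diff_distrib bic_zero)
  next
    case False
    then show ?thesis
      using Bic by (cases "k = 0")
        (simp_all add: idem_mult_single single_mult_idem left_diff_distrib bic_zero)
  qed
qed

lemma idem_in_S_sub: "idem i \<in> S_sub {i}"
  unfolding idem_def by (intro S_sub_diff S_sub_one S_sub_single) (simp add: mon_in_def xy_mon_def)

lemma idem_prod_in_S_sub: "idem_prod N \<in> S_sub N"
  unfolding idem_prod_def by (intro S_sub_sum S_sub_single) (auto simp: mon_in_def xy_mon_set_def)

lemma idem_prod_empty [simp]: "idem_prod {} = 1"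
  by (simp add: idem_prod_def xy_mon_set_def fun_eq_iff zero_fun_def[symmetric])

lemma idem_prod_insert:
  assumes "finite N" "i \<notin> N"
  shows "idem_prod (insert i N) = idem i * (idem_prod N :: ('n, 'k::field) jac)"
proof -
  have inj: "inj_on (insert i) (Pow N)"
    using assms(2) by (auto simp: inj_on_def)
  have xy: "xy_mon i + xy_mon_set T = xy_mon_set (insert i T)" if "T \<in> Pow N" for T
    using that assms(2) by (auto simp: fun_eq_iff xy_mon_def xy_mon_set_def bic_zero)
  have card: "card (insert i T) = Suc (card T)" if "T \<in> Pow N" for T
    using that assms by (auto intro: card_insert_disjoint finite_subset)
  have "idem_prod (insert i N) = (\<Sum>T\<in>Pow N. Poly_Mapping.single (xy_mon_set T) ((-1) ^ card T)) +
       (\<Sum>T\<in>insert i ` Pow N. Poly_Mapping.single (xy_mon_set T) ((-1::'k) ^ card T))"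
    unfolding idem_prod_def Pow_insert by (rule sum.union_disjoint) (use assms in auto)
  also have "(\<Sum>T\<in>insert i ` Pow N. Poly_Mapping.single (xy_mon_set T) ((-1::'k) ^ card T)) =
      - (\<Sum>T\<in>Pow N. Poly_Mapping.single (xy_mon i) 1 * Poly_Mapping.single (xy_mon_set T) ((-1) ^ card T))"
    unfolding sum.reindex[OF inj] sum_negf[symmetric]
    by (intro sum.cong refl) (simp add: card xy mult_single single_uminus)
  finally show ?thesis
    by (simp add: idem_def left_diff_distrib sum_distrib_left[symmetric] idem_prod_def)
qed

lemma idem_idem_prod_commute: "i \<notin> N \<Longrightarrow> idem i * idem_prod N = (idem_prod N :: ('n, 'k::field) jac) * idem i"
  by (rule S_sub_commute[OF idem_in_S_sub idem_prod_in_S_sub]) auto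

lemma idem_prod_sandwich_single:
  fixes c :: "'k::field"
  assumes "finite N"
  shows "idem_prod N * Poly_Mapping.single w c * idem_prod N = (if restrict_mon N w = 0
     then idem_prod N * Poly_Mapping.single (restrict_mon (- N) w) c else 0)"
  using assms
proof (induction N arbitrary: w rule: finite_induct)
  case empty
  then show ?case by (simp add: restrict_mon_def zero_fun_def[symmetric])
next
  case (insert i N)
  define w' where "w' = restrict_mon (- N) w"
  have comm: "idem i * idem_prod N = idem_prod N * idem i"
    using insert by (simp add: idem_idem_prod_commute)
  have ins: "idem_prod (insert i N) = idem i * idem_prod N" "idem_prod (insert i N) = idem_prod N * idem i"
    using idem_prod_insert[OF insert(1,2)] comm by metis+
  have "idem_prod (insert i N) * Poly_Mapping.single w c * idem_prod (insert i N) =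
      idem i * (idem_prod N * Poly_Mapping.single w c * idem_prod N) * idem i"
    by (subst (1) ins(1), subst ins(2)) (simp only: mult.assoc)
  also have "\<dots> = (if restrict_mon N w = 0
      then idem_prod N * (idem i * Poly_Mapping.single w' c * idem i) else 0)"
    by (cases "restrict_mon N w = 0") (simp_all only: insert.IH w'_def if_True if_False simp_thms
        mult.assoc[symmetric] comm mult_zero_left mult_zero_right)
  also have "\<dots> = (if restrict_mon (insert i N) w = 0
      then idem_prod (insert i N) * Poly_Mapping.single (restrict_mon (- insert i N) w) c else 0)"
  proof -
    have "restrict_mon (insert i N) w = 0 \<longleftrightarrow> restrict_mon N w = 0 \<and> w' i = 0"
      using insert.hyps(2) by (auto simp: w'_def restrict_mon_def fun_eq_iff)
    moreover have "w'(i := 0) = restrict_mon (- insert i N) w"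
      by (auto simp: w'_def restrict_mon_def fun_eq_iff)
    ultimately show ?thesis
      unfolding idem_sandwich_single by (auto simp: ins(1) mult.assoc[symmetric] comm)
  qed
  finally show ?case .
qed

lemma idem_prod_idem: "finite N \<Longrightarrow> idem_prod N * idem_prod N = (idem_prod N :: ('n, 'k::field) jac)"
  using idem_prod_sandwich_single[of N 0 "1::'k"] by simp

lemma lookup_idem_prod_zero:
  assumes "finite N"
  shows "Poly_Mapping.lookup (idem_prod N :: ('n, 'k::field) jac) 0 = 1"
proof -
  have "{T \<in> Pow N. xy_mon_set T = 0} = {{}}"
    by (auto simp: xy_mon_set_def fun_eq_iff bic_zero)
  moreover have "Poly_Mapping.lookup (idem_prod N :: ('n, 'k) jac) 0 =
      (\<Sum>T\<in>{T\<in>Pow N. xy_mon_set T = 0}. (-1::'k) ^ card T)"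
    unfolding idem_prod_def by (rule lookup_sum_single) (simp add: assms)
  ultimately show ?thesis by simp
qed

lemma idem_prod_mult_idem_prod:
  assumes "finite N" and "a \<in> S_sub (- N)"
  shows "(idem_prod N * a) * (idem_prod N * b) = idem_prod N * (a * (b :: ('n, 'k::field) jac))"
proof -
  have "a * idem_prod N = idem_prod N * a"
    using S_sub_commute[OF assms(2) idem_prod_in_S_sub[of N]] by auto
  then have "(idem_prod N * a) * (idem_prod N * b) = (idem_prod N * idem_prod N) * (a * b)"
    by (metis mult.assoc)
  then show ?thesis
    by (simp add: idem_prod_idem[OF \<open>finite N\<close>])
qed

lemma component_zero_idem_prod_mult:
  "finite N \<Longrightarrow> c \<in> S_sub (- N) \<Longrightarrow> component N 0 (idem_prod N * c) = c"
  by (simp add: component_mult[OF idem_prod_in_S_sub] lookup_idem_prod_zero)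

lemma ideal_inD:
  assumes "ideal_in R I"
  shows "I \<subseteq> R" "0 \<in> I" "\<And>a b. a \<in> I \<Longrightarrow> b \<in> I \<Longrightarrow> a + b \<in> I" "\<And>a. a \<in> I \<Longrightarrow> - a \<in> I"
    "\<And>r a. r \<in> R \<Longrightarrow> a \<in> I \<Longrightarrow> r * a \<in> I" "\<And>r a. r \<in> R \<Longrightarrow> a \<in> I \<Longrightarrow> a * r \<in> I"
  using assms unfolding ideal_in_def by blast+

lemma ideal_in_sum: "ideal_in R I \<Longrightarrow> (\<And>i. i \<in> A \<Longrightarrow> f i \<in> I) \<Longrightarrow> sum f A \<in> I"
  by (induction A rule: infinite_finite_induct) (simp_all add: ideal_in_def)

lemma ideal_in_diff:
  assumes "ideal_in R I" "a \<in> I" "b \<in> I"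
  shows "a - b \<in> I"
  using ideal_inD(3)[OF assms(1,2) ideal_inD(4)[OF assms(1,3)]] by simp

lemma ideal_in_UNIV_mult: "ideal_in UNIV I \<Longrightarrow> a \<in> I \<Longrightarrow> r * a * s \<in> I"
  using ideal_inD(5,6)[of UNIV I] by blast

lemma sum_notin_ideal_in:
  assumes "ideal_in R I" "finite A" "a \<in> A" "f a \<notin> I" "\<And>b. b \<in> A - {a} \<Longrightarrow> f b \<in> I"
  shows "sum f A \<notin> I"
proof
  assume "sum f A \<in> I"
  moreover have "sum f A = f a + sum f (A - {a})"
    using assms(2,3) by (simp add: sum.remove)
  moreover have "sum f (A - {a}) \<in> I"
    using assms(5) by (intro ideal_in_sum[OF assms(1)])
  ultimately show False
    using assms(4) ideal_in_diff[OF assms(1)] by (metis add_diff_cancel_right')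
qed

lemma ideal_in_one_iff:
  fixes I :: "'a::ring_1 set"
  assumes "ideal_in R I" "1 \<in> R"
  shows "1 \<in> I \<longleftrightarrow> I = R"
proof
  assume "1 \<in> I"
  then have "r \<in> I" if "r \<in> R" for r
    using ideal_inD(6)[OF assms(1) that, of 1] by simp
  then show "I = R" using ideal_inD(1)[OF assms(1)] by blast
qed (use assms(2) in simp)

text \<open>To apply \<^const>\<open>prime_in\<close> one needs ideals \<open>I \<ni> a\<close>, \<open>J \<ni> b\<close> with \<open>I J \<subseteq> P\<close>;
  the proofs below take the largest ones.\<close>

lemma prime_in_UNIV_elem:
  fixes P :: "'a::ring_1 set"
  assumes prime: "prime_in UNIV P" and all: "\<And>s. a * s * b \<in> P"
  shows "a \<in> P \<or> b \<in> P"
proof -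
  have P: "ideal_in UNIV P" using prime by (simp add: prime_in_def)
  note P' = ideal_inD[OF P]
  define I where "I = {x. \<forall>s. x * s * b \<in> P}"
  define J where "J = {y. \<forall>x\<in>I. \<forall>s. x * s * y \<in> P}"
  have "ideal_in UNIV I"
    unfolding ideal_in_def
  proof (intro conjI ballI)
    fix x y r assume x: "x \<in> I" and y: "y \<in> I"
    show "x + y \<in> I" "- x \<in> I" using x y P'(3,4) by (simp_all add: I_def distrib_right)
    show "r * x \<in> I" using x P'(5)[of r] by (simp add: I_def mult.assoc)
    show "x * r \<in> I" using x by (simp add: I_def) (metis mult.assoc)
  qed (use P'(2) in \<open>auto simp: I_def\<close>)
  moreover have "ideal_in UNIV J"
    unfolding ideal_in_def
  proof (intro conjI ballI)
    fix x y r assume x: "x \<in> J" and y: "y \<in> J"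
    show "x + y \<in> J" "- x \<in> J" using x y P'(3,4) by (simp_all add: J_def distrib_left)
    show "r * x \<in> J" using x by (simp add: J_def) (metis mult.assoc)
    show "x * r \<in> J" using x P'(6)[of r] by (simp add: J_def mult.assoc[symmetric])
  qed (use P'(2) in \<open>auto simp: J_def\<close>)
  moreover have "\<forall>x\<in>I. \<forall>y\<in>J. x * y \<in> P"
    unfolding J_def using mult_1_right by (metis (mono_tags, lifting) mem_Collect_eq)
  ultimately have "I \<subseteq> P \<or> J \<subseteq> P"
    using prime unfolding prime_in_def by blast
  moreover have "a \<in> I" "b \<in> J" using all by (simp_all add: I_def J_def)
  ultimately show ?thesis by blast
qed

lemma prime_in_UNIVI:
  fixes P :: "'a::ring_1 set"
  assumes P: "ideal_in UNIV P" and "1 \<notin> P"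
    and elem: "\<And>a b. (\<And>s. a * s * b \<in> P) \<Longrightarrow> a \<in> P \<or> b \<in> P"
  shows "prime_in UNIV P"
  unfolding prime_in_def
proof (intro conjI P allI impI)
  show "P \<noteq> UNIV" using \<open>1 \<notin> P\<close> by blast
  fix I J :: "'a set"
  assume "ideal_in UNIV I" "ideal_in UNIV J" and prod: "\<forall>a\<in>I. \<forall>b\<in>J. a * b \<in> P"
  then have "a * s * b \<in> P" if "a \<in> I" "b \<in> J" for a b s
    using that ideal_inD(5)[of UNIV J s b] by (simp add: mult.assoc)
  then show "I \<subseteq> P \<or> J \<subseteq> P" using elem by blast
qed

definition subring :: "'a::ring_1 set \<Rightarrow> bool" where
  "subring R \<longleftrightarrow> 0 \<in> R \<and> 1 \<in> R \<and> (\<forall>a\<in>R. \<forall>b\<in>R. a + b \<in> R \<and> a * b \<in> R \<and> - a \<in> R)"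

lemma prime_in_subring_elem:
  fixes q :: "'a::comm_ring_1 set"
  assumes R: "subring R" and prime: "prime_in R q"
    and "a \<in> R" "b \<in> R" "a * b \<in> q"
  shows "a \<in> q \<or> b \<in> q"
proof -
  have q: "ideal_in R q" using prime by (simp add: prime_in_def)
  note q' = ideal_inD[OF q]
  have R': "0 \<in> R" "\<And>x y. x \<in> R \<Longrightarrow> y \<in> R \<Longrightarrow> x + y \<in> R \<and> x * y \<in> R \<and> - x \<in> R"
    using R by (auto simp: subring_def)
  define I where "I = {x\<in>R. x * b \<in> q}"
  define J where "J = {y\<in>R. \<forall>x\<in>I. x * y \<in> q}"
  have "ideal_in R I"
    unfolding ideal_in_def
  proof (intro conjI ballI)
    fix x y assume "x \<in> I" "y \<in> I"
    then show "x + y \<in> I" "- x \<in> I" using q'(3,4) R' by (simp_all add: I_def distrib_right)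
  next
    fix x r assume x: "x \<in> I" and r: "r \<in> R"
    show "r * x \<in> I" "x * r \<in> I"
      using x r q'(5)[of r "x * b"] R' by (simp_all add: I_def mult.assoc mult.left_commute)
  qed (use q'(2) R' in \<open>auto simp: I_def\<close>)
  moreover have "ideal_in R J"
    unfolding ideal_in_def
  proof (intro conjI ballI)
    fix x y assume "x \<in> J" "y \<in> J"
    then show "x + y \<in> J" "- x \<in> J" using q'(3,4) R' by (simp_all add: J_def distrib_left)
  next
    fix x r assume x: "x \<in> J" and r: "r \<in> R"
    have "y * (r * x) \<in> q" if "y \<in> I" for y
      using x r q'(5)[of r "y * x"] that by (simp add: J_def mult.left_commute)
    then show "r * x \<in> J" "x * r \<in> J"
      using x r R' by (simp_all add: J_def mult.commute)
  qed (use q'(2) R' in \<open>auto simp: J_def\<close>)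
  moreover have "\<forall>x\<in>I. \<forall>y\<in>J. x * y \<in> q"
    unfolding J_def by blast
  ultimately have "I \<subseteq> q \<or> J \<subseteq> q"
    using prime unfolding prime_in_def by blast
  moreover have "a \<in> I" "b \<in> J"
    using assms(3-5) by (auto simp: I_def J_def mult.commute)
  ultimately show ?thesis by blast
qed

lemma prime_in_subringI:
  fixes q :: "'a::comm_ring_1 set"
  assumes q: "ideal_in R q" and "q \<noteq> R"
    and elem: "\<And>a b. a \<in> R \<Longrightarrow> b \<in> R \<Longrightarrow> a * b \<in> q \<Longrightarrow> a \<in> q \<or> b \<in> q"
  shows "prime_in R q"
  unfolding prime_in_def
proof (intro conjI q \<open>q \<noteq> R\<close> allI impI)
  fix I J :: "'a set"
  assume "ideal_in R I" "ideal_in R J" "\<forall>a\<in>I. \<forall>b\<in>J. a * b \<in> q"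
  then show "I \<subseteq> q \<or> J \<subseteq> q"
    using elem ideal_inD(1) by blast
qed

section \<open>Isolating a component\<close>

definition y_pow :: "('n \<Rightarrow> nat) \<Rightarrow> ('n, 'k::field) jac" where
  "y_pow K = Poly_Mapping.single (\<lambda>i. Bic 0 (K i)) 1"

definition x_pow :: "('n \<Rightarrow> nat) \<Rightarrow> ('n, 'k::field) jac" where
  "x_pow L = Poly_Mapping.single (\<lambda>i. Bic (L i) 0) 1"

text \<open>\<open>cancels N K L u\<close> says that \<open>y\<^sup>K u x\<^sup>L = 1\<close> in every variable of \<open>N\<close>.\<close>

definition cancels :: "'n set \<Rightarrow> ('n \<Rightarrow> nat) \<Rightarrow> ('n \<Rightarrow> nat) \<Rightarrow> ('n \<Rightarrow> bic) \<Rightarrow> bool" where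
  "cancels N K L u \<longleftrightarrow> (\<forall>i\<in>N. bx (u i) \<le> K i \<and> K i - bx (u i) + by' (u i) = L i)"

lemma Bic_add_add_Bic_eq_zero_iff: "Bic 0 K + b + Bic L 0 = 0 \<longleftrightarrow> bx b \<le> K \<and> K - bx b + by' b = L"
  by (cases b) (auto simp: bic_zero)

lemma idem_prod_sandwich_pow_single:
  fixes c :: "'k::field"
  assumes "finite N" and KL: "\<And>i. i \<notin> N \<Longrightarrow> K i = 0 \<and> L i = 0"
  shows "idem_prod N * (y_pow K * Poly_Mapping.single m c * x_pow L) * idem_prod N =
    (if cancels N K L (restrict_mon N m)
     then idem_prod N * Poly_Mapping.single (restrict_mon (- N) m) c else 0)"
proof -
  define w where "w = (\<lambda>i. Bic 0 (K i)) + m + (\<lambda>i. Bic (L i) 0)"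
  have "y_pow K * Poly_Mapping.single m c * x_pow L = Poly_Mapping.single w c"
    unfolding y_pow_def x_pow_def w_def by (simp add: mult_single)
  moreover have "restrict_mon N w = 0 \<longleftrightarrow> cancels N K L (restrict_mon N m)"
    unfolding cancels_def restrict_mon_def w_def fun_eq_iff by (auto simp: Bic_add_add_Bic_eq_zero_iff)
  moreover have "restrict_mon (- N) w = restrict_mon (- N) m"
    unfolding restrict_mon_def w_def fun_eq_iff using KL by (auto simp: bic_zero[symmetric])
  ultimately show ?thesis
    by (simp add: idem_prod_sandwich_single[OF \<open>finite N\<close>])
qed

lemma idem_prod_sandwich_pow:
  fixes x :: "('n, 'k::field) jac"
  assumes "finite N" and "\<And>i. i \<notin> N \<Longrightarrow> K i = 0 \<and> L i = 0"
  shows "idem_prod N * (y_pow K * x * x_pow L) * idem_prod N =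
    idem_prod N * (\<Sum>u\<in>{u\<in>restrict_mon N ` Poly_Mapping.keys x. cancels N K L u}. component N u x)"
proof -
  define S where "S = {m\<in>Poly_Mapping.keys x. cancels N K L (restrict_mon N m)}"
  have "idem_prod N * (y_pow K * x * x_pow L) * idem_prod N = (\<Sum>m\<in>Poly_Mapping.keys x.
      idem_prod N * (y_pow K * Poly_Mapping.single m (Poly_Mapping.lookup x m) * x_pow L) * idem_prod N)"
    by (subst (1) poly_mapping_sum_single[of x]) (simp add: sum_distrib_left sum_distrib_right)
  also have "\<dots> = (\<Sum>m\<in>Poly_Mapping.keys x. if cancels N K L (restrict_mon N m)
      then idem_prod N * Poly_Mapping.single (restrict_mon (- N) m) (Poly_Mapping.lookup x m) else 0)"
    by (intro sum.cong refl idem_prod_sandwich_pow_single[OF assms])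
  also have "\<dots> = (\<Sum>m\<in>S. idem_prod N * Poly_Mapping.single (restrict_mon (- N) m) (Poly_Mapping.lookup x m))"
    unfolding S_def by (simp add: sum.inter_filter)
  also have "\<dots> = idem_prod N * (\<Sum>u\<in>{u\<in>restrict_mon N ` Poly_Mapping.keys x. cancels N K L u}.
      \<Sum>m | m \<in> S \<and> restrict_mon N m = u. Poly_Mapping.single (restrict_mon (- N) m) (Poly_Mapping.lookup x m))"
    by (subst sum.group) (auto simp: S_def sum_distrib_left)
  also have "\<dots> = idem_prod N * (\<Sum>u\<in>{u\<in>restrict_mon N ` Poly_Mapping.keys x. cancels N K L u}. component N u x)"
    unfolding component_def S_def by (intro arg_cong[where f = "(*) _"] sum.cong refl) (auto intro: sum.cong)
  finally show ?thesis .
qed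

lemma cancels_sum_bx_less:
  assumes "finite N" "mon_in N u" "mon_in N u0" "u \<noteq> u0"
    and "cancels N (\<lambda>i. bx (u0 i)) (\<lambda>i. by' (u0 i)) u"
  shows "(\<Sum>i\<in>N. bx (u i)) < (\<Sum>i\<in>N. bx (u0 i))"
proof -
  have le: "\<forall>i\<in>N. bx (u i) \<le> bx (u0 i)"
    and eq_y: "\<forall>i\<in>N. bx (u i) = bx (u0 i) \<longrightarrow> by' (u i) = by' (u0 i)"
    using assms(5) by (auto simp: cancels_def)
  have "\<exists>i\<in>N. bx (u i) < bx (u0 i)"
  proof (rule ccontr)
    assume "\<not> ?thesis"
    then have "bx (u i) = bx (u0 i) \<and> by' (u i) = by' (u0 i)" if "i \<in> N" for i
      using le eq_y that by (meson le_neq_implies_less)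
    then have "u i = u0 i" for i
      using assms(2,3) bic_eta[of "u i"] bic_eta[of "u0 i"] by (cases "i \<in> N") (auto simp: mon_in_def)
    then show False using \<open>u \<noteq> u0\<close> by auto
  qed
  then show ?thesis
    using le \<open>finite N\<close> by (intro sum_strict_mono_ex1) auto
qed

text \<open>Choose \<open>u\<^sub>0\<close> with \<open>component N u\<^sub>0 x \<notin> G\<close> and minimal total \<open>x\<close>-degree, and sandwich
  \<open>x\<close> with \<open>y\<^sup>K\<close>, \<open>x\<^sup>L\<close> (where \<open>u\<^sub>0 = x\<^sup>K y\<^sup>L\<close>) and \<open>idem_prod N\<close>: the surviving components
  are those of \<open>u\<^sub>0\<close> and of monomials of smaller degree, which lie in \<open>G\<close>.\<close>

lemma isolate_component:
  fixes x :: "('n, 'k::field) jac"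
  assumes "finite N" and G: "ideal_in R G" and bad: "component N u1 x \<notin> G"
  obtains r s x' where "x' \<in> S_sub (- N)" "x' \<notin> G" "r * x * s = idem_prod N * x'"
proof -
  define deg where "deg u = (\<Sum>i\<in>N. bx (u i))" for u :: "'n \<Rightarrow> bic"
  obtain u0 where u0: "component N u0 x \<notin> G"
    and min: "\<And>u. component N u x \<notin> G \<Longrightarrow> deg u0 \<le> deg u"
    using ex_has_least_nat[of "\<lambda>u. component N u x \<notin> G" u1 deg] bad by blast
  have "0 \<in> G" using ideal_inD(2)[OF G] .
  then have u0_mon: "mon_in N u0" and u0_key: "u0 \<in> restrict_mon N ` Poly_Mapping.keys x"
    using u0 component_not_mon_in component_notin_image by metis+
  define K where "K i = (if i \<in> N then bx (u0 i) else 0)" for i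
  define L where "L i = (if i \<in> N then by' (u0 i) else 0)" for i
  define T where "T = {u\<in>restrict_mon N ` Poly_Mapping.keys x. cancels N K L u}"
  have "u0 \<in> T"
    unfolding T_def cancels_def K_def L_def using u0_key by auto
  have others: "component N u x \<in> G" if "u \<in> T - {u0}" for u
  proof (rule ccontr)
    assume not_G: "component N u x \<notin> G"
    have "cancels N K L = cancels N (\<lambda>i. bx (u0 i)) (\<lambda>i. by' (u0 i))"
      by (simp add: cancels_def K_def L_def fun_eq_iff)
    then have "cancels N (\<lambda>i. bx (u0 i)) (\<lambda>i. by' (u0 i)) u"
      using that by (simp add: T_def)
    then have "deg u < deg u0"
      unfolding deg_def using that mon_in_restrict_mon
      by (intro cancels_sum_bx_less[OF \<open>finite N\<close> _ u0_mon]) (auto simp: T_def)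
    then show False using min[OF not_G] by simp
  qed
  define x' where "x' = (\<Sum>u\<in>T. component N u x)"
  have "x' \<in> S_sub (- N)"
    unfolding x'_def by (intro S_sub_sum component_in_S_sub)
  moreover have "x' \<notin> G"
    unfolding x'_def using u0 others \<open>u0 \<in> T\<close> by (intro sum_notin_ideal_in[OF G]) (simp_all add: T_def)
  moreover have "(idem_prod N * y_pow K) * x * (x_pow L * idem_prod N) = idem_prod N * x'"
    using idem_prod_sandwich_pow[OF \<open>finite N\<close>, of K L x]
    by (simp add: x'_def T_def K_def L_def mult.assoc)
  ultimately show ?thesis using that by blast
qed

section \<open>The epimorphism \<open>\<pi>\<close> onto Laurent polynomials\<close>

lemma lap_mon_add: "lap_mon (a + b) = lap_mon a + lap_mon b"
proof
  fix i
  show "lap_mon (a + b) i = (lap_mon a + lap_mon b) i"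
    by (cases "a i"; cases "b i") (auto simp: lap_mon_def)
qed

lemma lap_mon_zero [simp]: "lap_mon 0 = 0"
  by (rule ext) (simp add: lap_mon_def bic_zero)

lemma lap_mon_xy_mon: "lap_mon (xy_mon i) = 0"
  by (rule ext) (simp add: lap_mon_def xy_mon_def bic_zero)

lemma lookup_piS:
  "Poly_Mapping.lookup (piS p) e = (\<Sum>m\<in>{m\<in>Poly_Mapping.keys p. lap_mon m = e}. Poly_Mapping.lookup p m)"
  unfolding piS_def by (rule lookup_sum_single) simp

lemma lookup_piS_superset:
  assumes "finite A" "Poly_Mapping.keys p \<subseteq> A"
  shows "Poly_Mapping.lookup (piS p) e = (\<Sum>m\<in>{m\<in>A. lap_mon m = e}. Poly_Mapping.lookup p m)"
  unfolding lookup_piS using assms by (intro sum.mono_neutral_left) (auto simp: in_keys_iff)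

lemma piS_add: "piS (p + q) = piS p + piS q"
proof (rule poly_mapping_eqI)
  fix e
  define A where "A = Poly_Mapping.keys p \<union> Poly_Mapping.keys q"
  have "finite A" "Poly_Mapping.keys (p + q) \<subseteq> A" "Poly_Mapping.keys p \<subseteq> A" "Poly_Mapping.keys q \<subseteq> A"
    using keys_add[of p q] by (auto simp: A_def)
  then show "Poly_Mapping.lookup (piS (p + q)) e = Poly_Mapping.lookup (piS p + piS q) e"
    by (simp add: lookup_piS_superset lookup_add sum.distrib)
qed

lemma piS_uminus: "piS (- p) = - piS p"
  by (rule poly_mapping_eqI) (simp add: lookup_piS sum_negf)

lemma piS_diff: "piS (p - q) = piS p - piS q"
  using piS_add[of p "- q"] by (simp add: piS_uminus)

lemma piS_zero [simp]: "piS 0 = 0"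
  by (simp add: piS_def)

lemma piS_sum: "piS (sum f A) = (\<Sum>i\<in>A. piS (f i))"
  by (induction A rule: infinite_finite_induct) (auto simp: piS_add)

lemma piS_single: "piS (Poly_Mapping.single m c) = Poly_Mapping.single (lap_mon m) c"
  by (cases "c = 0") (simp_all add: piS_def)

lemma piS_mult: "piS (p * q) = piS p * piS q"
proof -
  have "piS (p * q) = (\<Sum>w\<in>Poly_Mapping.keys p. \<Sum>v\<in>Poly_Mapping.keys q.
      Poly_Mapping.single (lap_mon w + lap_mon v) (Poly_Mapping.lookup p w * Poly_Mapping.lookup q v))"
    by (subst times_sum_single) (simp add: piS_sum piS_single lap_mon_add)
  also have "\<dots> = (\<Sum>w\<in>Poly_Mapping.keys p. Poly_Mapping.single (lap_mon w) (Poly_Mapping.lookup p w)) *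
      (\<Sum>v\<in>Poly_Mapping.keys q. Poly_Mapping.single (lap_mon v) (Poly_Mapping.lookup q v))"
    by (simp add: sum_distrib_left sum_distrib_right mult_single) (rule sum.swap)
  finally show ?thesis by (simp add: piS_def)
qed

lemma piS_one [simp]: "piS 1 = 1"
  using piS_single[of 0 1] by simp

lemma piS_idem: "piS (idem i) = 0"
  by (simp add: idem_def piS_diff piS_single lap_mon_xy_mon)

text \<open>The monomial \<open>x\<^sup>e\<close> or \<open>y\<^sup>-\<^sup>e\<close> of \<open>S\<^sub>n\<close> representing a Laurent monomial; it gives a
  linear section of \<open>\<pi>\<close>.\<close>

definition canon_mon :: "('n \<Rightarrow> int) \<Rightarrow> 'n \<Rightarrow> bic" where
  "canon_mon e = (\<lambda>i. if e i \<ge> 0 then Bic (nat (e i)) 0 else Bic 0 (nat (- e i)))"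

definition lift_laur :: "('n, 'k::field) laur \<Rightarrow> ('n, 'k) jac" where
  "lift_laur r = (\<Sum>e\<in>Poly_Mapping.keys r. Poly_Mapping.single (canon_mon e) (Poly_Mapping.lookup r e))"

lemma lap_mon_canon_mon [simp]: "lap_mon (canon_mon e) = e"
  by (rule ext) (simp add: lap_mon_def canon_mon_def)

lemma L_sub_iff: "r \<in> L_sub A \<longleftrightarrow> (\<forall>e\<in>Poly_Mapping.keys r. \<forall>i. i \<notin> A \<longrightarrow> e i = 0)"
  by (simp add: L_sub_def)

lemma lift_laur_in_S_sub: "r \<in> L_sub A \<Longrightarrow> lift_laur r \<in> S_sub A"
  unfolding lift_laur_def
  by (intro S_sub_sum S_sub_single) (fastforce simp: L_sub_iff mon_in_def canon_mon_def bic_zero)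

lemma piS_lift_laur [simp]: "piS (lift_laur r) = r"
  unfolding lift_laur_def piS_sum piS_single lap_mon_canon_mon by (rule poly_mapping_sum_single[symmetric])

lemma piS_in_L_sub:
  assumes "p \<in> S_sub A"
  shows "piS p \<in> L_sub A"
  unfolding L_sub_iff
proof (intro ballI allI impI)
  fix e i assume "e \<in> Poly_Mapping.keys (piS p)" "i \<notin> A"
  then obtain m where "m \<in> Poly_Mapping.keys p" "lap_mon m = e"
    by (auto simp: in_keys_iff lookup_piS elim: sum.not_neutral_contains_not_neutral)
  then show "e i = 0"
    using assms \<open>i \<notin> A\<close> by (auto simp: S_sub_iff mon_in_def lap_mon_def bic_zero)
qed

lemma L_sub_eq_image_piS: "L_sub A = piS ` S_sub A"
  using lift_laur_in_S_sub piS_in_L_sub piS_lift_laur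
  by (metis image_eqI image_subset_iff subsetI subset_antisym)

lemma subring_L_sub: "subring (L_sub A :: ('n, 'k::field) laur set)"
  unfolding subring_def L_sub_eq_image_piS
  by (auto simp flip: piS_add piS_mult piS_uminus piS_zero piS_one
      intro!: S_sub_add S_sub_mult S_sub_uminus)

text \<open>\<open>x\<^sup>k y\<^sup>l - x\<^sup>k\<^sup>+\<^sup>1 y\<^sup>l\<^sup>+\<^sup>1 = x\<^sup>k (1 - x y) y\<^sup>l\<close> in each variable.\<close>

lemma single_diff_eq_idem_sandwich:
  assumes "m i = Bic (Suc k) (Suc l)"
  shows "Poly_Mapping.single (m(i := Bic k l)) c - Poly_Mapping.single m c =
    Poly_Mapping.single (m(i := 0)) c * (Poly_Mapping.single (0(i := Bic k 0)) 1 * idem i *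
      Poly_Mapping.single (0(i := Bic 0 l)) (1::'k::field))"
proof -
  have "0(i := Bic k 0) + xy_mon i = 0(i := Bic (Suc k) 1)"
    "0(i := Bic k 0) + 0(i := Bic 0 l) = 0(i := Bic k l)"
    "0(i := Bic (Suc k) 1) + 0(i := Bic 0 l) = 0(i := Bic (Suc k) (Suc l))"
    "m(i := 0) + 0(i := Bic k l) = m(i := Bic k l)"
    "m(i := 0) + 0(i := Bic (Suc k) (Suc l)) = m"
    by (auto simp: fun_eq_iff xy_mon_def assms)
  then show ?thesis
    unfolding idem_def right_diff_distrib left_diff_distrib mult_single
    by (simp add: mult_single add.assoc)
qed

definition overlap :: "('n::finite \<Rightarrow> bic) \<Rightarrow> nat" where
  "overlap m = (\<Sum>i\<in>UNIV. min (bx (m i)) (by' (m i)))"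

lemma single_diff_canon_mon_in_ideal:
  fixes P :: "('n::finite, 'k::field) jac set"
  assumes P: "ideal_in UNIV P" and idem: "\<And>i. i \<in> A \<Longrightarrow> idem i \<in> P" and "mon_in A m"
  shows "Poly_Mapping.single m c - Poly_Mapping.single (canon_mon (lap_mon m)) c \<in> P"
  using \<open>mon_in A m\<close>
proof (induction "overlap m" arbitrary: m rule: less_induct)
  case less
  show ?case
  proof (cases "\<exists>i. bx (m i) \<noteq> 0 \<and> by' (m i) \<noteq> 0")
    case False
    have "canon_mon (lap_mon m) i = m i" for i
      using False[simplified, rule_format, of i] by (cases "m i") (auto simp: canon_mon_def lap_mon_def)
    then have "canon_mon (lap_mon m) = m" ..
    then show ?thesis using ideal_inD(2)[OF P] by simp
  next
    case True
    then obtain i k l where mi: "m i = Bic (Suc k) (Suc l)"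
      by (metis bic_eta not0_implies_Suc)
    have "i \<in> A" using less.prems mi by (auto simp: mon_in_def bic_zero)
    define m' where "m' = m(i := Bic k l)"
    have "lap_mon m' = lap_mon m"
      by (rule ext) (simp add: m'_def lap_mon_def mi)
    moreover have "overlap m' < overlap m"
      unfolding overlap_def by (rule sum_strict_mono_ex1) (auto simp: m'_def mi min_def)
    moreover have "mon_in A m'" using less.prems \<open>i \<in> A\<close> by (auto simp: mon_in_def m'_def)
    ultimately have "Poly_Mapping.single m' c - Poly_Mapping.single (canon_mon (lap_mon m)) c \<in> P"
      using less.hyps by metis
    moreover have "Poly_Mapping.single m' c - Poly_Mapping.single m c \<in> P"
      unfolding m'_def single_diff_eq_idem_sandwich[of m i, OF mi]
      using ideal_in_UNIV_mult[OF P idem[OF \<open>i \<in> A\<close>]] ideal_inD(5)[OF P] by (simp add: mult.assoc)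
    ultimately show ?thesis
      using ideal_in_diff[OF P] by fastforce
  qed
qed

lemma ker_piS_subset_ideal:
  fixes P :: "('n::finite, 'k::field) jac set"
  assumes P: "ideal_in UNIV P" and idem: "\<And>i. i \<in> A \<Longrightarrow> idem i \<in> P"
    and "d \<in> S_sub A" "piS d = 0"
  shows "d \<in> P"
proof -
  have z: "(\<Sum>m\<in>Poly_Mapping.keys d.
      Poly_Mapping.single (canon_mon (lap_mon m)) (Poly_Mapping.lookup d m)) = 0"
  proof (rule poly_mapping_eqI)
    fix w
    have "{m\<in>Poly_Mapping.keys d. canon_mon (lap_mon m) = w} =
        (if canon_mon (lap_mon w) = w then {m\<in>Poly_Mapping.keys d. lap_mon m = lap_mon w} else {})"
      by (auto simp del: lap_mon_canon_mon) (metis lap_mon_canon_mon)+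
    then show "Poly_Mapping.lookup (\<Sum>m\<in>Poly_Mapping.keys d.
        Poly_Mapping.single (canon_mon (lap_mon m)) (Poly_Mapping.lookup d m)) w = Poly_Mapping.lookup 0 w"
      using \<open>piS d = 0\<close> lookup_piS[of d "lap_mon w"] by (simp add: lookup_sum_single)
  qed
  have "(\<Sum>m\<in>Poly_Mapping.keys d. Poly_Mapping.single m (Poly_Mapping.lookup d m) -
      Poly_Mapping.single (canon_mon (lap_mon m)) (Poly_Mapping.lookup d m)) \<in> P"
    using \<open>d \<in> S_sub A\<close>
    by (intro ideal_in_sum[OF P] single_diff_canon_mon_in_ideal[OF P idem]) (auto simp: S_sub_iff)
  then show ?thesis
    using z poly_mapping_sum_single[of d] by (simp add: sum_subtractf)
qed

lemma mem_tensE: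
  assumes "x \<in> tens N J"
  obtains r :: nat and a b :: "nat \<Rightarrow> ('n, 'k::field) jac"
  where "x = (\<Sum>i<r. a i * b i)" "\<And>i. i < r \<Longrightarrow> a i \<in> S_sub N" "\<And>i. i < r \<Longrightarrow> b i \<in> J"
  using assms unfolding tens_def by blast

lemma mem_tensI:
  fixes a b :: "nat \<Rightarrow> ('n, 'k::field) jac"
  shows "(\<And>i. i < r \<Longrightarrow> a i \<in> S_sub N) \<Longrightarrow> (\<And>i. i < r \<Longrightarrow> b i \<in> J) \<Longrightarrow> (\<Sum>i<r. a i * b i) \<in> tens N J"
  unfolding tens_def mem_Collect_eq by (intro exI[of _ r] exI[of _ a] exI[of _ b]) simp

lemma tens_subset_ideal:
  fixes J :: "('n, 'k::field) jac set"
  assumes P: "ideal_in UNIV P" and "J \<subseteq> P"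
  shows "tens N J \<subseteq> P"
proof
  fix x assume "x \<in> tens N J"
  then obtain r and a b :: "nat \<Rightarrow> ('n, 'k) jac" where "x = (\<Sum>i<r. a i * b i)" "\<And>i. i < r \<Longrightarrow> b i \<in> J"
    by (blast elim: mem_tensE)
  then show "x \<in> P"
    using \<open>J \<subseteq> P\<close> by (auto intro: ideal_in_sum[OF P] ideal_inD(5)[OF P])
qed

lemma mem_tens_iff:
  fixes J :: "('n, 'k::field) jac set"
  assumes J: "ideal_in (S_sub (- N)) J"
  shows "x \<in> tens N J \<longleftrightarrow> (\<forall>u. component N u x \<in> J)"
proof
  assume "x \<in> tens N J"
  then obtain r and a b :: "nat \<Rightarrow> ('n, 'k) jac" where x: "x = (\<Sum>i<r. a i * b i)"
    and a: "\<And>i. i < r \<Longrightarrow> a i \<in> S_sub N" and b: "\<And>i. i < r \<Longrightarrow> b i \<in> J"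
    by (blast elim: mem_tensE)
  have "b i \<in> S_sub (- N)" if "i < r" for i
    using b[OF that] ideal_inD(1)[OF J] by blast
  then have "component N u x = (\<Sum>i<r. Poly_Mapping.single 0 (Poly_Mapping.lookup (a i) u) * b i)" for u
    unfolding x component_sum by (intro sum.cong refl component_mult a) auto
  moreover have "Poly_Mapping.single 0 c \<in> S_sub (- N)" for c :: 'k
    by (simp add: S_sub_single)
  ultimately show "\<forall>u. component N u x \<in> J"
    using b by (auto intro!: ideal_in_sum[OF J] ideal_inD(5)[OF J])
next
  assume all: "\<forall>u. component N u x \<in> J"
  define U where "U = restrict_mon N ` Poly_Mapping.keys x"
  obtain h where h: "bij_betw h {..<card U} U"
    using ex_bij_betw_nat_finite[of U] by (auto simp: U_def lessThan_atLeast0)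
  have "x = (\<Sum>u\<in>U. Poly_Mapping.single u 1 * component N u x)"
    unfolding U_def by (rule sum_component)
  also have "\<dots> = (\<Sum>i<card U. Poly_Mapping.single (h i) 1 * component N (h i) x)"
    by (rule sum.reindex_bij_betw[OF h, symmetric])
  also have "\<dots> \<in> tens N J"
  proof (intro mem_tensI S_sub_single)
    fix i assume "i < card U"
    then show "mon_in N (h i)"
      using bij_betwE[OF h] mon_in_restrict_mon by (force simp: U_def)
  qed (use all in blast)
  finally show "x \<in> tens N J" .
qed

lemma tens_Int_S_sub_Compl:
  fixes J :: "('n, 'k::field) jac set"
  assumes J: "ideal_in (S_sub (- N)) J" and "x \<in> S_sub (- N)"
  shows "x \<in> tens N J \<longleftrightarrow> x \<in> J"
  using ideal_inD(2)[OF J]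
  by (auto simp: mem_tens_iff[OF J] component_S_sub_Compl[OF \<open>x \<in> S_sub (- N)\<close>])

lemma mult_tens:
  fixes J :: "('n, 'k::field) jac set"
  assumes J: "ideal_in (S_sub (- N)) J" and x: "x \<in> tens N J"
    and "a \<in> S_sub N" and s: "s \<in> S_sub (- N)"
  shows "a * s * x \<in> tens N J" and "x * s * a \<in> tens N J"
proof -
  obtain r and a' b :: "nat \<Rightarrow> ('n, 'k) jac" where x: "x = (\<Sum>i<r. a' i * b i)"
    and a': "\<And>i. i < r \<Longrightarrow> a' i \<in> S_sub N" and b: "\<And>i. i < r \<Longrightarrow> b i \<in> J"
    using x by (blast elim: mem_tensE)
  have comm: "s * (a' i * b i) = a' i * (s * b i)" if "i < r" for i
    using S_sub_commute[OF s a'[OF that]] by (simp add: mult.assoc[symmetric])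
  have "a * s * x = (\<Sum>i<r. (a * a' i) * (s * b i))"
    unfolding x sum_distrib_left by (intro sum.cong refl) (simp add: comm mult.assoc)
  also have "\<dots> \<in> tens N J"
    using a' b \<open>a \<in> S_sub N\<close> ideal_inD(5)[OF J s] by (auto intro!: mem_tensI S_sub_mult)
  finally show "a * s * x \<in> tens N J" .
  have comm': "b i * (s * a) = a * (b i * s)" if "i < r" for i
  proof -
    have "b i * s \<in> S_sub (- N)"
      using ideal_inD(6)[OF J s b[OF that]] ideal_inD(1)[OF J] by blast
    then show ?thesis
      using S_sub_commute[OF _ \<open>a \<in> S_sub N\<close>] by (fastforce simp: mult.assoc)
  qed
  have "x * s * a = (\<Sum>i<r. (a' i * a) * (b i * s))"
    unfolding x sum_distrib_right by (intro sum.cong refl) (simp add: comm' mult.assoc)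
  also have "\<dots> \<in> tens N J"
    using a' b \<open>a \<in> S_sub N\<close> ideal_inD(6)[OF J s] by (auto intro!: mem_tensI S_sub_mult)
  finally show "x * s * a \<in> tens N J" .
qed

lemma tens_sum:
  fixes J :: "('n, 'k::field) jac set"
  assumes J: "ideal_in (S_sub (- N)) J" and "\<And>i. i \<in> A \<Longrightarrow> f i \<in> tens N J"
  shows "sum f A \<in> tens N J"
  using assms(2) by (induction A rule: infinite_finite_induct)
    (auto simp: mem_tens_iff[OF J] component_add intro: ideal_inD[OF J])

lemma ideal_tens:
  fixes J :: "('n, 'k::field) jac set"
  assumes J: "ideal_in (S_sub (- N)) J"
  shows "ideal_in UNIV (tens N J)"
proof -
  have J': "0 \<in> J" "\<And>a b. a \<in> J \<Longrightarrow> b \<in> J \<Longrightarrow> a + b \<in> J" "\<And>a. a \<in> J \<Longrightarrow> - a \<in> J"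
    using ideal_inD[OF J] by blast+
  have single: "Poly_Mapping.single m c * x \<in> tens N J" "x * Poly_Mapping.single m c \<in> tens N J"
    if "x \<in> tens N J" for x m c
    using mult_tens[OF J that S_sub_single_restrict_mon S_sub_single_restrict_mon]
    by (subst single_eq_restrict_mon_mult[of m c N], simp add: mult.assoc,
        subst single_eq_restrict_mon_mult'[of m c N], simp add: mult.assoc)
  have "r * x \<in> tens N J \<and> x * r \<in> tens N J" if x: "x \<in> tens N J" for r x
  proof -
    have "r * x = (\<Sum>m\<in>Poly_Mapping.keys r. Poly_Mapping.single m (Poly_Mapping.lookup r m) * x)"
      "x * r = (\<Sum>m\<in>Poly_Mapping.keys r. x * Poly_Mapping.single m (Poly_Mapping.lookup r m))"
      by (subst poly_mapping_sum_single[of r], simp add: sum_distrib_left sum_distrib_right)+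
    then show ?thesis
      using single[OF x] by (auto intro: tens_sum[OF J])
  qed
  then show ?thesis
    unfolding ideal_in_def by (auto simp: mem_tens_iff[OF J] component_add component_uminus J')
qed

section \<open>Prime ideals of \<open>S\<^sub>n\<close>\<close>

lemma ideal_in_UNIV_sandwich:
  fixes P :: "('n, 'k::field) jac set"
  assumes P: "ideal_in UNIV P" and single: "\<And>m c. a * Poly_Mapping.single m c * b \<in> P"
  shows "a * s * b \<in> P"
proof -
  have "a * s * b = (\<Sum>m\<in>Poly_Mapping.keys s. a * Poly_Mapping.single m (Poly_Mapping.lookup s m) * b)"
    by (subst poly_mapping_sum_single[of s]) (simp add: sum_distrib_left sum_distrib_right)
  also have "\<dots> \<in> P"
    by (intro ideal_in_sum[OF P] single)
  finally show ?thesis .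
qed

lemma ideal_Int_S_sub:
  fixes P :: "('n, 'k::field) jac set"
  shows "ideal_in UNIV P \<Longrightarrow> ideal_in (S_sub A) (P \<inter> S_sub A)"
  by (auto simp: ideal_in_def intro: S_sub_add S_sub_uminus S_sub_mult)

lemma prime_cancel_idem:
  fixes P :: "('n, 'k::field) jac set"
  assumes prime: "prime_in UNIV P" and "idem i \<notin> P"
    and d: "d \<in> S_sub (- {i})" and "idem i * d \<in> P"
  shows "d \<in> P"
proof -
  have P: "ideal_in UNIV P" using prime by (simp add: prime_in_def)
  have "idem i * Poly_Mapping.single m c * d \<in> P" for m c
  proof -
    define s where "s = Poly_Mapping.single (restrict_mon (- {i}) m) c"
    define w where "w = Poly_Mapping.single (restrict_mon {i} m) (1::'k)"
    have "idem i * s = s * idem i"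
      unfolding s_def by (rule S_sub_commute[OF idem_in_S_sub S_sub_single_restrict_mon]) auto
    moreover have "w * d = d * w"
      unfolding w_def by (rule S_sub_commute[OF S_sub_single_restrict_mon d]) auto
    ultimately have "idem i * Poly_Mapping.single m c * d = s * (idem i * d) * w"
      unfolding single_eq_restrict_mon_mult'[of m c "{i}"] s_def[symmetric] w_def[symmetric]
      by (metis mult.assoc)
    then show ?thesis
      using ideal_in_UNIV_mult[OF P \<open>idem i * d \<in> P\<close>] by simp
  qed
  then have "idem i * s * d \<in> P" for s
    by (rule ideal_in_UNIV_sandwich[OF P])
  then show ?thesis
    using prime_in_UNIV_elem[OF prime] \<open>idem i \<notin> P\<close> by blast
qed

lemma prime_cancel_idem_prod:
  fixes P :: "('n, 'k::field) jac set"
  assumes prime: "prime_in UNIV P" and "finite M" and "\<And>i. i \<in> M \<Longrightarrow> idem i \<notin> P"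
    and "c \<in> S_sub (- M)" and "idem_prod M * c \<in> P"
  shows "c \<in> P"
  using assms(2-5)
proof (induction M arbitrary: c rule: finite_induct)
  case (insert i M)
  have "c \<in> S_sub (- M)" using insert.prems(2) by (rule S_sub_mono) auto
  moreover have "idem_prod M * c \<in> S_sub (- {i})"
    using insert.hyps(2)
    by (intro S_sub_mult S_sub_mono[OF idem_prod_in_S_sub] S_sub_mono[OF insert.prems(2)]) auto
  moreover have "idem i * (idem_prod M * c) \<in> P"
    using insert.prems(3) insert.hyps by (simp add: idem_prod_insert mult.assoc)
  ultimately show ?case
    using prime_cancel_idem[OF prime] insert.prems(1) insert.IH by blast
qed simp

lemma ideal_pi_inv:
  fixes q :: "('n, 'k::field) laur set"
  assumes q: "ideal_in (L_sub A) q"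
  shows "ideal_in (S_sub A) (pi_inv A q)"
proof -
  note q' = ideal_inD[OF q]
  have "piS r * piS a \<in> q \<and> piS a * piS r \<in> q" if "r \<in> S_sub A" "piS a \<in> q" for r a
    using q'(5,6)[OF piS_in_L_sub[OF that(1)] that(2)] by blast
  then show ?thesis
    using q'(2-4) by (auto simp: ideal_in_def pi_inv_def piS_add piS_uminus piS_mult
        intro: S_sub_add S_sub_uminus S_sub_mult)
qed

lemma piS_image_pi_inv:
  fixes q :: "('n, 'k::field) laur set"
  assumes "q \<subseteq> L_sub A"
  shows "piS ` pi_inv A q = q"
proof
  show "q \<subseteq> piS ` pi_inv A q"
  proof
    fix r assume "r \<in> q"
    then have "lift_laur r \<in> pi_inv A q"
      using assms lift_laur_in_S_sub by (auto simp: pi_inv_def)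
    then show "r \<in> piS ` pi_inv A q"
      by (rule rev_image_eqI) simp
  qed
qed (auto simp: pi_inv_def)

lemma ideal_image_piS:
  fixes J :: "('n, 'k::field) jac set"
  assumes J: "ideal_in (S_sub A) J"
  shows "ideal_in (L_sub A) (piS ` J)"
proof -
  note J' = ideal_inD[OF J]
  have "piS a * piS r \<in> piS ` J \<and> piS r * piS a \<in> piS ` J" if "r \<in> S_sub A" "a \<in> J" for r a
    using J'(5,6)[OF that] by (auto simp flip: piS_mult)
  then show ?thesis
    unfolding ideal_in_def L_sub_eq_image_piS using J'(1-4)
    by (auto simp flip: piS_add piS_uminus piS_zero)
qed

lemma pi_inv_image_piS:
  fixes P :: "('n::finite, 'k::field) jac set"
  assumes P: "ideal_in UNIV P" and idem: "\<And>i. i \<in> A \<Longrightarrow> idem i \<in> P"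
  shows "pi_inv A (piS ` (P \<inter> S_sub A)) = P \<inter> S_sub A"
proof
  show "pi_inv A (piS ` (P \<inter> S_sub A)) \<subseteq> P \<inter> S_sub A"
  proof
    fix a assume "a \<in> pi_inv A (piS ` (P \<inter> S_sub A))"
    then obtain j where a: "a \<in> S_sub A" and j: "j \<in> P" "j \<in> S_sub A" and "piS a = piS j"
      by (auto simp: pi_inv_def)
    then have "a - j \<in> P"
      by (intro ker_piS_subset_ideal[OF P idem]) (auto simp: piS_diff intro: S_sub_diff)
    then show "a \<in> P \<inter> S_sub A"
      using ideal_inD(3)[OF P _ \<open>j \<in> P\<close>] a by fastforce
  qed
qed (auto simp: pi_inv_def)

text \<open>The \<open>S\<^sub>N\<close>-part of a monomial commutes with \<open>\<alpha>\<close>; the rest is absorbed by \<open>q\<close>.\<close>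

lemma sandwich_in_ideal_of_pi_inv:
  fixes P :: "('n, 'k::field) jac set"
  assumes P: "ideal_in UNIV P" and q: "ideal_in (L_sub (- N)) q" and "pi_inv (- N) q \<subseteq> P"
    and \<alpha>: "\<alpha> \<in> S_sub (- N)" and \<beta>: "\<beta> \<in> S_sub (- N)" and "piS \<alpha> * piS \<beta> \<in> q"
  shows "\<alpha> * s * \<beta> \<in> P"
proof (rule ideal_in_UNIV_sandwich[OF P])
  fix m and c :: 'k
  define t where "t = Poly_Mapping.single (restrict_mon (- N) m) c"
  have t: "t \<in> S_sub (- N)"
    unfolding t_def by (rule S_sub_single_restrict_mon)
  have "piS (\<alpha> * t * \<beta>) = (piS \<alpha> * piS \<beta>) * piS t"
    by (simp add: piS_mult mult.commute mult.left_commute)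
  then have "piS (\<alpha> * t * \<beta>) \<in> q"
    using ideal_inD(6)[OF q piS_in_L_sub[OF t] \<open>piS \<alpha> * piS \<beta> \<in> q\<close>] by simp
  moreover have "\<alpha> * t * \<beta> \<in> S_sub (- N)"
    using \<alpha> \<beta> t by (intro S_sub_mult)
  ultimately have "\<alpha> * t * \<beta> \<in> P"
    using \<open>pi_inv (- N) q \<subseteq> P\<close> by (auto simp: pi_inv_def)
  moreover have "\<alpha> * Poly_Mapping.single (restrict_mon N m) 1 = Poly_Mapping.single (restrict_mon N m) 1 * \<alpha>"
    using S_sub_commute[OF \<alpha> S_sub_single_restrict_mon] by auto
  then have "\<alpha> * Poly_Mapping.single m c * \<beta> = Poly_Mapping.single (restrict_mon N m) 1 * (\<alpha> * t * \<beta>)"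
    unfolding single_eq_restrict_mon_mult[of m c N] t_def[symmetric] by (simp add: mult.assoc[symmetric])
  ultimately show "\<alpha> * Poly_Mapping.single m c * \<beta> \<in> P"
    using ideal_inD(5)[OF P UNIV_I] by simp
qed

lemma prime_image_piS:
  fixes P :: "('n::finite, 'k::field) jac set"
  assumes prime: "prime_in UNIV P" and idem: "\<And>i. i \<notin> N \<Longrightarrow> idem i \<in> P"
  shows "prime_in (L_sub (- N)) (piS ` (P \<inter> S_sub (- N)))"
proof -
  define J where "J = P \<inter> S_sub (- N)"
  define q where "q = piS ` J"
  have P: "ideal_in UNIV P" and "P \<noteq> UNIV" using prime by (auto simp: prime_in_def)
  have J: "ideal_in (S_sub (- N)) J"
    unfolding J_def by (rule ideal_Int_S_sub[OF P])
  have pi_inv: "pi_inv (- N) q = J"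
    unfolding q_def J_def using idem by (intro pi_inv_image_piS[OF P]) auto
  have q: "ideal_in (L_sub (- N)) q"
    unfolding q_def by (rule ideal_image_piS[OF J])
  have "1 \<notin> q"
  proof
    assume "1 \<in> q"
    then have "1 \<in> pi_inv (- N) q"
      by (simp add: pi_inv_def)
    then have "1 \<in> P"
      unfolding pi_inv J_def by simp
    then show False
      using ideal_in_one_iff[OF P] \<open>P \<noteq> UNIV\<close> by simp
  qed
  then have "q \<noteq> L_sub (- N)"
    using subring_L_sub by (auto simp: subring_def)
  moreover have "a \<in> q \<or> b \<in> q"
    if a: "a \<in> L_sub (- N)" and b: "b \<in> L_sub (- N)" and "a * b \<in> q" for a b
  proof -
    have lifts: "lift_laur a \<in> S_sub (- N)" "lift_laur b \<in> S_sub (- N)"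
      using a b by (simp_all add: lift_laur_in_S_sub)
    have "lift_laur a * s * lift_laur b \<in> P" for s
      using \<open>a * b \<in> q\<close> pi_inv by (intro sandwich_in_ideal_of_pi_inv[OF P q _ lifts]) (auto simp: J_def)
    then have "lift_laur a \<in> J \<or> lift_laur b \<in> J"
      using prime_in_UNIV_elem[OF prime] lifts by (simp add: J_def)
    then show ?thesis
      unfolding q_def using piS_lift_laur by (metis image_eqI)
  qed
  ultimately show ?thesis
    unfolding q_def J_def by (intro prime_in_subringI[OF q[unfolded q_def J_def]])
qed

lemma prime_eq_tens:
  fixes P :: "('n, 'k::field) jac set"
  assumes prime: "prime_in UNIV P" and N: "N = {i. idem i \<notin> P}" "finite N"
  shows "P = tens N (P \<inter> S_sub (- N))"
proof -
  define J where "J = P \<inter> S_sub (- N)"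
  have P: "ideal_in UNIV P" using prime by (simp add: prime_in_def)
  have J: "ideal_in (S_sub (- N)) J"
    unfolding J_def by (rule ideal_Int_S_sub[OF P])
  have "component N u x \<in> J" if "x \<in> P" for u x
  proof (rule ccontr)
    assume "component N u x \<notin> J"
    then obtain r s x' where x': "x' \<in> S_sub (- N)" "x' \<notin> J" "r * x * s = idem_prod N * x'"
      using isolate_component[OF \<open>finite N\<close> J] by blast
    then have "idem_prod N * x' \<in> P"
      using ideal_in_UNIV_mult[OF P \<open>x \<in> P\<close>] by metis
    then have "x' \<in> P"
      using prime_cancel_idem_prod[OF prime \<open>finite N\<close>] x'(1) N(1) by blast
    then show False using x' by (simp add: J_def)
  qed
  then have "P \<subseteq> tens N J"
    using mem_tens_iff[OF J] by blast
  moreover have "tens N J \<subseteq> P"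
    by (rule tens_subset_ideal[OF P]) (simp add: J_def)
  ultimately show ?thesis unfolding J_def by blast
qed

text \<open>If \<open>a s b \<in> P\<close> for all \<open>s\<close> but \<open>a, b \<notin> P\<close>, isolate bad components \<open>a', b' \<in> S\<^sub>C\<^sub>N\<close> of
  \<open>a\<close> and \<open>b\<close>; then \<open>idem_prod N * a' * b' \<in> P\<close>, whose \<open>0\<close>-component \<open>a' b'\<close> contradicts the
  primality of \<open>q\<close>.\<close>

lemma tens_pi_inv_elem:
  fixes q :: "('n, 'k::field) laur set"
  assumes prime: "prime_in (L_sub (- N)) q" and "finite N"
    and all: "\<And>s. a * s * b \<in> tens N (pi_inv (- N) q)"
  shows "a \<in> tens N (pi_inv (- N) q) \<or> b \<in> tens N (pi_inv (- N) q)"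
proof (rule ccontr)
  define J where "J = pi_inv (- N) q"
  have q: "ideal_in (L_sub (- N)) q"
    using prime by (simp add: prime_in_def)
  have J: "ideal_in (S_sub (- N)) J"
    unfolding J_def by (rule ideal_pi_inv[OF q])
  have mem_J: "x \<in> J \<longleftrightarrow> x \<in> S_sub (- N) \<and> piS x \<in> q" for x
    by (simp add: J_def pi_inv_def)
  assume "\<not> (a \<in> tens N (pi_inv (- N) q) \<or> b \<in> tens N (pi_inv (- N) q))"
  then obtain ua ub where "component N ua a \<notin> J" "component N ub b \<notin> J"
    unfolding J_def[symmetric] mem_tens_iff[OF J] by blast
  obtain r1 s1 a' where a': "a' \<in> S_sub (- N)" "a' \<notin> J" "r1 * a * s1 = idem_prod N * a'"
    using isolate_component[OF \<open>finite N\<close> J \<open>component N ua a \<notin> J\<close>] by blast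
  obtain r2 s2 b' where b': "b' \<in> S_sub (- N)" "b' \<notin> J" "r2 * b * s2 = idem_prod N * b'"
    using isolate_component[OF \<open>finite N\<close> J \<open>component N ub b \<notin> J\<close>] by blast
  have "r1 * (a * (s1 * r2) * b) * s2 \<in> tens N J"
    unfolding J_def by (rule ideal_in_UNIV_mult[OF ideal_tens[OF J[unfolded J_def]] all])
  moreover have "r1 * (a * (s1 * r2) * b) * s2 = (idem_prod N * a') * (idem_prod N * b')"
    unfolding a'(3)[symmetric] b'(3)[symmetric] by (simp add: mult.assoc)
  also have "\<dots> = idem_prod N * (a' * b')"
    by (rule idem_prod_mult_idem_prod[OF \<open>finite N\<close> a'(1)])
  ultimately have "component N 0 (idem_prod N * (a' * b')) \<in> J"
    unfolding mem_tens_iff[OF J] by simp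
  then have "piS a' * piS b' \<in> q"
    using component_zero_idem_prod_mult[OF \<open>finite N\<close> S_sub_mult[OF a'(1) b'(1)]]
    by (simp add: mem_J piS_mult)
  then have "piS a' \<in> q \<or> piS b' \<in> q"
    using prime_in_subring_elem[OF subring_L_sub prime] piS_in_L_sub a'(1) b'(1) by blast
  then show False
    using a' b' by (simp add: mem_J)
qed

lemma prime_tens_pi_inv:
  fixes q :: "('n, 'k::field) laur set"
  assumes prime: "prime_in (L_sub (- N)) q" and "finite N"
  shows "prime_in UNIV (tens N (pi_inv (- N) q))"
proof (rule prime_in_UNIVI)
  have q: "ideal_in (L_sub (- N)) q" and "q \<noteq> L_sub (- N)"
    using prime by (auto simp: prime_in_def)
  have J: "ideal_in (S_sub (- N)) (pi_inv (- N) q)"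
    by (rule ideal_pi_inv[OF q])
  then show "ideal_in UNIV (tens N (pi_inv (- N) q))"
    by (rule ideal_tens)
  have "1 \<notin> q"
    using ideal_in_one_iff[OF q] subring_L_sub \<open>q \<noteq> L_sub (- N)\<close> by (auto simp: subring_def)
  then show "1 \<notin> tens N (pi_inv (- N) q)"
    unfolding tens_Int_S_sub_Compl[OF J S_sub_one] by (simp add: pi_inv_def)
qed (rule tens_pi_inv_elem[OF prime \<open>finite N\<close>])

lemma idem_notin_tens_pi_inv_iff:
  fixes q :: "('n, 'k::field) laur set"
  assumes q: "ideal_in (L_sub (- N)) q" and "1 \<notin> q"
  shows "idem i \<notin> tens N (pi_inv (- N) q) \<longleftrightarrow> i \<in> N"
proof -
  have J: "ideal_in (S_sub (- N)) (pi_inv (- N) q)"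
    by (rule ideal_pi_inv[OF q])
  show ?thesis
  proof
    assume "idem i \<notin> tens N (pi_inv (- N) q)"
    moreover have "idem i \<in> tens N (pi_inv (- N) q)" if "i \<notin> N"
    proof -
      have "idem i \<in> S_sub (- N)"
        using S_sub_mono[OF idem_in_S_sub, of i "- N"] that by auto
      then have "idem i \<in> pi_inv (- N) q"
        using ideal_inD(2)[OF q] by (simp add: pi_inv_def piS_idem)
      then show ?thesis
        using tens_Int_S_sub_Compl[OF J \<open>idem i \<in> S_sub (- N)\<close>] by blast
    qed
    ultimately show "i \<in> N" by blast
  next
    assume "i \<in> N"
    have "component N 0 (idem i :: ('n, 'k) jac) = 1"
    proof -
      have "idem i \<in> S_sub N"
        using S_sub_mono[OF idem_in_S_sub, of i N] \<open>i \<in> N\<close> by auto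
      moreover have "Poly_Mapping.lookup (idem i :: ('n, 'k) jac) 0 = 1"
        by (simp add: idem_def lookup_minus lookup_single xy_mon_def fun_eq_iff bic_zero)
      ultimately show ?thesis
        using component_mult[OF _ S_sub_one, of "idem i" N 0] by (metis mult_1_right single_one)
    qed
    moreover have "1 \<notin> pi_inv (- N) q"
      using \<open>1 \<notin> q\<close> by (simp add: pi_inv_def)
    ultimately show "idem i \<notin> tens N (pi_inv (- N) q)"
      unfolding mem_tens_iff[OF J] by metis
  qed
qed

lemma prime_decomposition:
  fixes P :: "('n::finite, 'k::field) jac set"
  assumes "prime_in UNIV P"
  defines "N \<equiv> {i. idem i \<notin> P}"
  shows "prime_in (L_sub (- N)) (piS ` (P \<inter> S_sub (- N)))"
    and "P = tens N (pi_inv (- N) (piS ` (P \<inter> S_sub (- N))))"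
proof -
  have P: "ideal_in UNIV P" using assms(1) by (simp add: prime_in_def)
  show "prime_in (L_sub (- N)) (piS ` (P \<inter> S_sub (- N)))"
    by (rule prime_image_piS[OF assms(1)]) (simp add: N_def)
  have "pi_inv (- N) (piS ` (P \<inter> S_sub (- N))) = P \<inter> S_sub (- N)"
    by (rule pi_inv_image_piS[OF P]) (simp add: N_def)
  then show "P = tens N (pi_inv (- N) (piS ` (P \<inter> S_sub (- N))))"
    using prime_eq_tens[OF assms(1)] by (simp add: N_def)
qed

lemma prime_decomposition_unique:
  fixes q :: "('n::finite, 'k::field) laur set"
  assumes prime: "prime_in (L_sub (- N)) q" and P: "P = tens N (pi_inv (- N) q)"
  shows "N = {i. idem i \<notin> P}" and "q = piS ` (P \<inter> S_sub (- N))"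
proof -
  have q: "ideal_in (L_sub (- N)) q" and "q \<noteq> L_sub (- N)"
    using prime by (auto simp: prime_in_def)
  then have "1 \<notin> q"
    using ideal_in_one_iff[OF q] subring_L_sub by (auto simp: subring_def)
  then show "N = {i. idem i \<notin> P}"
    using idem_notin_tens_pi_inv_iff[OF q] P by auto
  have "P \<inter> S_sub (- N) = pi_inv (- N) q"
    using tens_Int_S_sub_Compl[OF ideal_pi_inv[OF q]] P by (auto simp: pi_inv_def)
  then show "q = piS ` (P \<inter> S_sub (- N))"
    using piS_image_pi_inv ideal_inD(1)[OF q] by metis
qed

lemma prime_ex1_decomposition:
  fixes P :: "('n::finite, 'k::field) jac set"
  assumes prime: "prime_in UNIV P"
  shows "\<exists>!(N, q). prime_in (L_sub (- N)) q \<and> P = tens N (pi_inv (- N) q)"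
proof -
  define N where "N = {i. idem i \<notin> P}"
  define q where "q = piS ` (P \<inter> S_sub (- N))"
  have "prime_in (L_sub (- N)) q \<and> P = tens N (pi_inv (- N) q)"
    using prime_decomposition[OF prime] by (simp add: N_def q_def)
  moreover have "(N', q') = (N, q)"
    if "prime_in (L_sub (- N')) q'" "P = tens N' (pi_inv (- N') q')" for N' q'
    using prime_decomposition_unique[OF that] by (simp add: N_def q_def)
  ultimately show ?thesis
    by (intro ex1I[of _ "(N, q)"]) auto
qed

lemma Spec_N_eq_idem_notin:
  "P \<in> Spec_N N \<Longrightarrow> N = {i. idem i \<notin> (P :: ('n::finite, 'k::field) jac set)}"
  using prime_decomposition_unique(1) by (auto simp: Spec_N_def)

theorem theorem4p4:
  shows "(\<forall>P :: ('n::finite, 'k::field) jac set. prime_in UNIV P \<longrightarrow>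
            (\<exists>!(N, q). prime_in (L_sub (- N)) q \<and> P = tens N (pi_inv (- N) q)))
       \<and> (\<forall>(N :: 'n set) (q :: ('n, 'k) laur set). prime_in (L_sub (- N)) q \<longrightarrow>
            prime_in UNIV (tens N (pi_inv (- N) q)))
       \<and> {P :: ('n, 'k) jac set. prime_in UNIV P} = (\<Union>N. Spec_N N)
       \<and> (\<forall>N1 N2. N1 \<noteq> N2 \<longrightarrow> Spec_N N1 \<inter> (Spec_N N2 :: ('n, 'k) jac set set) = {})"
proof (intro conjI allI impI)
  fix P :: "('n, 'k) jac set"
  assume "prime_in UNIV P"
  then show "\<exists>!(N, q). prime_in (L_sub (- N)) q \<and> P = tens N (pi_inv (- N) q)"
    by (rule prime_ex1_decomposition)
next
  fix N :: "'n set" and q :: "('n, 'k) laur set"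
  assume "prime_in (L_sub (- N)) q"
  then show "prime_in UNIV (tens N (pi_inv (- N) q))"
    by (rule prime_tens_pi_inv) simp
next
  show "{P :: ('n, 'k) jac set. prime_in UNIV P} = (\<Union>N. Spec_N N)"
    using prime_decomposition prime_tens_pi_inv by (fastforce simp: Spec_N_def)
next
  fix N1 N2 :: "'n set"
  assume "N1 \<noteq> N2"
  then show "Spec_N N1 \<inter> (Spec_N N2 :: ('n, 'k) jac set set) = {}"
    using Spec_N_eq_idem_notin by blast
qed

end
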